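(* Let $q\ge2$ and $BS(1,q)=\langle a,b\mid aba^{-1}=b^q\rangle$. Then $P_0=\{a^n(a^{-m}b^ka^m): k>0,\ m,n\in\mathbb{Z}\}$ is a regular positive cone relative to $\langle a\rangle$. In particular, $P=\{a^n:n>0\}\cup P_0$ is a regular positive cone of $BS(1,q)$.
   Context: For a group $H$ and subgroup $K$, a positive cone relative to $K$ is a subsemigroup $P\subseteq H$ with $H=P\sqcup K\sqcup P^{-1}$; a positive cone is one relative to $\{1\}$. Such a set is regular if there are a finite set $X$, a surjective monoid homomorphism $\pi\colon X^*\to H$ and a language $\mathcal{L}\subseteq X^*$ accepted by a finite state automaton with $\pi(\mathcal{L})=P$. *)

theory Defs
  imports "HOL-Algebra.Algebra"
begin

datatype gen = GA | GB

(* a letter is a generator together with a sign: True = positive, False = inverse *)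
type_synonym letter = "gen \<times> bool"

inductive bs_eq :: "nat \<Rightarrow> letter list \<Rightarrow> letter list \<Rightarrow> bool" for q :: nat where
  refl: "bs_eq q u u"
| sym: "bs_eq q u v \<Longrightarrow> bs_eq q v u"
| trans: "bs_eq q u v \<Longrightarrow> bs_eq q v w \<Longrightarrow> bs_eq q u w"
| ctxt: "bs_eq q u v \<Longrightarrow> bs_eq q (x @ u @ y) (x @ v @ y)"
| cancel: "bs_eq q [(g, s), (g, \<not> s)] []"
| rel: "bs_eq q [(GA, True), (GB, True), (GA, False)] (replicate q (GB, True))"

definition bs_rel :: "nat \<Rightarrow> (letter list \<times> letter list) set" where
  "bs_rel q = {(u, v). bs_eq q u v}"

definition BS :: "nat \<Rightarrow> letter list set monoid" where
  "BS q = \<lparr> carrier = UNIV // bs_rel q,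
            monoid.mult = (\<lambda>S T. bs_rel q `` {(SOME s. s \<in> S) @ (SOME t. t \<in> T)}),
            monoid.one = bs_rel q `` {[]} \<rparr>"

definition bs_a :: "nat \<Rightarrow> letter list set" where
  "bs_a q = bs_rel q `` {[(GA, True)]}"

definition bs_b :: "nat \<Rightarrow> letter list set" where
  "bs_b q = bs_rel q `` {[(GB, True)]}"

definition positive_cone_rel :: "('g, 'b) monoid_scheme \<Rightarrow> 'g set \<Rightarrow> 'g set \<Rightarrow> bool" where
  "positive_cone_rel H K P \<longleftrightarrow>
     P \<subseteq> carrier H \<and>
     (\<forall>x\<in>P. \<forall>y\<in>P. x \<otimes>\<^bsub>H\<^esub> y \<in> P) \<and>
     carrier H = P \<union> K \<union> (m_inv H) ` P \<and>
     P \<inter> K = {} \<and> P \<inter> (m_inv H) ` P = {} \<and> K \<inter> (m_inv H) ` P = {}"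

definition positive_cone :: "('g, 'b) monoid_scheme \<Rightarrow> 'g set \<Rightarrow> bool" where
  "positive_cone H P \<longleftrightarrow> positive_cone_rel H {\<one>\<^bsub>H\<^esub>} P"

text \<open>Languages over a finite alphabet Sig (a finite set of naturals) accepted by a
  finite state automaton (deterministic, which is equivalent to nondeterministic).\<close>
definition fsa_accepted :: "nat set \<Rightarrow> nat list set \<Rightarrow> bool" where
  "fsa_accepted Sig L \<longleftrightarrow>
     (\<exists>(Q :: nat set) q0 F (tr :: nat \<Rightarrow> nat \<Rightarrow> nat).
        finite Q \<and> q0 \<in> Q \<and> F \<subseteq> Q \<and> (\<forall>s\<in>Q. \<forall>x\<in>Sig. tr s x \<in> Q) \<and>
        L = {w \<in> lists Sig. foldl tr q0 w \<in> F})"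

definition regular_subset :: "('g, 'b) monoid_scheme \<Rightarrow> 'g set \<Rightarrow> bool" where
  "regular_subset H P \<longleftrightarrow>
     (\<exists>(Sig :: nat set) (\<pi> :: nat list \<Rightarrow> 'g) L.
        finite Sig \<and>
        \<pi> [] = \<one>\<^bsub>H\<^esub> \<and>
        (\<forall>u\<in>lists Sig. \<forall>v\<in>lists Sig. \<pi> (u @ v) = \<pi> u \<otimes>\<^bsub>H\<^esub> \<pi> v) \<and>
        \<pi> ` lists Sig = carrier H \<and>
        L \<subseteq> lists Sig \<and> fsa_accepted Sig L \<and> \<pi> ` L = P)"

end

theory Submission
  imports Defs
begin

text \<open>
  Represent BS(1,q) by affine maps of \<rat>: a acts as x \<mapsto> q x and b as x \<mapsto> x + 1.
  The relator lets every element be written a^-m b^k a^(m+n) with m \<ge> 0, acting as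
  x \<mapsto> q^n x + q^-m k; so the representation is faithful, P0 consists of the elements
  with translation part r > 0 and \<langle>a\<rangle> of those with r = 0. As r(gh) = q^n r(h) + r(g)
  with q^n > 0, both are pulled back from a relative positive cone of the affine group, and
  splitting r = 0 by the sign of n gives the positive cone P. Every word over a, a^-1, b that
  contains b has r > 0, and every normal form with k > 0 is spelled by such a word, so P0 is
  the image of this regular language (and P of its union with the nonempty powers of a).
\<close>

lemma (in group) inv_mult_cancel_left [simp]:
  "x \<in> carrier G \<Longrightarrow> y \<in> carrier G \<Longrightarrow> inv x \<otimes> (x \<otimes> y) = y"
  by (simp flip: m_assoc)

lemma (in group) conj_int_pow:
  assumes "x \<in> carrier G" and "h \<in> carrier G"
  shows "(x \<otimes> h \<otimes> inv x) [^] (k::int) = x \<otimes> h [^] k \<otimes> inv x"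
proof -
  have "group_hom G G (\<lambda>h. x \<otimes> h \<otimes> inv x)"
    using assms(1) by (auto simp: group_hom_def group_hom_axioms_def hom_def is_group m_assoc)
  from group_hom.hom_int_pow[OF this assms(2)] show ?thesis by simp
qed

locale bs_generators = group G for G (structure) +
  fixes a b :: 'a and q :: nat
  assumes a_closed [simp]: "a \<in> carrier G" and b_closed [simp]: "b \<in> carrier G"
    and relator: "a \<otimes> b \<otimes> inv a = b [^] q"
begin

definition normal_form :: "nat \<Rightarrow> int \<Rightarrow> int \<Rightarrow> 'a" where
  "normal_form m k n = a [^] (- int m) \<otimes> b [^] k \<otimes> a [^] (int m + n)"

lemma a_int_pow_add: "a [^] (i + j :: int) = a [^] i \<otimes> a [^] j"
  by (simp add: int_pow_mult)

lemma conj_a_b_int_pow: "a \<otimes> b [^] (k::int) \<otimes> inv a = b [^] (int q * k)"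
proof -
  have "a \<otimes> b [^] k \<otimes> inv a = (a \<otimes> b \<otimes> inv a) [^] k" by (simp add: conj_int_pow)
  also have "\<dots> = (b [^] int q) [^] k" by (simp add: relator int_pow_int)
  also have "\<dots> = b [^] (int q * k)" by (simp add: int_pow_pow)
  finally show ?thesis .
qed

lemma conj_a_pow_b_int_pow:
  "a [^] (m::nat) \<otimes> b [^] (j::int) \<otimes> inv (a [^] m) = b [^] (int q ^ m * j)"
proof (induction m arbitrary: j)
  case 0
  then show ?case by simp
next
  case (Suc m)
  have "a [^] Suc m \<otimes> b [^] j \<otimes> inv (a [^] Suc m)
      = a \<otimes> (a [^] m \<otimes> b [^] j \<otimes> inv (a [^] m)) \<otimes> inv a"
    unfolding nat_pow_Suc2[OF a_closed] by (simp add: inv_mult_group m_assoc del: nat_pow_Suc)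
  also have "\<dots> = b [^] (int q ^ Suc m * j)"
    by (simp add: Suc.IH conj_a_b_int_pow mult.assoc)
  finally show ?case .
qed

lemma b_int_pow_eq_conj: "b [^] (j::int) = a [^] (- int m) \<otimes> b [^] (int q ^ m * j) \<otimes> a [^] int m"
proof -
  have "a [^] (- int m) \<otimes> b [^] (int q ^ m * j) \<otimes> a [^] int m
      = inv (a [^] m) \<otimes> (a [^] m \<otimes> b [^] j \<otimes> inv (a [^] m)) \<otimes> a [^] m"
    by (simp add: conj_a_pow_b_int_pow int_pow_neg_int int_pow_int)
  also have "\<dots> = b [^] j"
    by (simp add: m_assoc)
  finally show ?thesis by simp
qed

lemma normal_form_rescale: "normal_form m k n = normal_form (m + t) (int q ^ t * k) n"
proof -
  have "normal_form (m + t) (int q ^ t * k) n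
      = a [^] (- int m) \<otimes> (a [^] (- int t) \<otimes> b [^] (int q ^ t * k) \<otimes> a [^] int t)
          \<otimes> a [^] (int m + n)"
    unfolding normal_form_def
    using a_int_pow_add[of "- int m" "- int t"] a_int_pow_add[of "int t" "int m + n"]
    by (simp add: m_assoc add_ac)
  then show ?thesis
    by (simp flip: b_int_pow_eq_conj add: normal_form_def)
qed

lemma a_mult_normal_form: "a \<otimes> normal_form m k n = normal_form m (int q * k) (n + 1)"
proof -
  have "a \<otimes> normal_form (m + 1) (int q * k) n = normal_form m (int q * k) (n + 1)"
    unfolding normal_form_def
    using a_int_pow_add[of 1 "- int (m + 1)"] by (simp add: m_assoc add_ac)
  then show ?thesis
    using normal_form_rescale[of m k n 1] by simp
qed

lemma inv_a_mult_normal_form: "inv a \<otimes> normal_form m k n = normal_form (Suc m) k (n - 1)"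
  unfolding normal_form_def
  using a_int_pow_add[of "- 1" "- int m"] by (simp add: m_assoc int_pow_neg add_ac)

lemma b_int_pow_mult_normal_form:
  "b [^] (j::int) \<otimes> normal_form m k n = normal_form m (int q ^ m * j + k) n"
proof -
  have "b [^] j \<otimes> normal_form m k n
      = a [^] (- int m) \<otimes> b [^] (int q ^ m * j) \<otimes> (a [^] int m \<otimes> a [^] (- int m))
          \<otimes> b [^] k \<otimes> a [^] (int m + n)"
    by (subst b_int_pow_eq_conj[of _ m]) (simp add: normal_form_def m_assoc)
  also have "\<dots> = normal_form m (int q ^ m * j + k) n"
    by (simp add: normal_form_def m_assoc int_pow_mult int_pow_neg)
  finally show ?thesis .
qed

lemma normal_form_0_0: "normal_form m 0 0 = \<one>"
  unfolding normal_form_def using a_int_pow_add[of "- int m" "int m"] by simp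

lemma normal_form_eq_a_int_pow_mult_conj:
  "normal_form m k n = a [^] n \<otimes> (a [^] (- (int m + n)) \<otimes> b [^] k \<otimes> a [^] (int m + n))"
  unfolding normal_form_def
  using a_int_pow_add[of n "- (int m + n)"] by (simp add: m_assoc)

end

section \<open>Pulling back relative positive cones\<close>

lemma (in group) inv_image_eq: "A \<subseteq> carrier G \<Longrightarrow> m_inv G ` A = {x \<in> carrier G. inv x \<in> A}"
  by (auto intro!: image_eqI[where x = "inv x" for x])

lemma positive_cone_rel_vimage:
  assumes h: "group_hom G H h" and P: "positive_cone_rel H K P"
  shows "positive_cone_rel G (h -` K \<inter> carrier G) (h -` P \<inter> carrier G)"
proof -
  interpret group_hom G H h by (fact h)
  have P_sub: "P \<subseteq> carrier H"
    using P unfolding positive_cone_rel_def by blast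
  have inv_P: "m_inv G ` (h -` P \<inter> carrier G) = h -` (m_inv H ` P) \<inter> carrier G"
    by (auto simp: G.inv_image_eq H.inv_image_eq[OF P_sub])
  show ?thesis
    using P unfolding positive_cone_rel_def inv_P by auto
qed

lemma positive_cone_vimage:
  assumes h: "group_hom G H h" and inj: "inj_on h (carrier G)" and P: "positive_cone H P"
  shows "positive_cone G (h -` P \<inter> carrier G)"
proof -
  have "h -` {\<one>\<^bsub>H\<^esub>} \<inter> carrier G = kernel G H h"
    by (auto simp: kernel_def)
  also have "\<dots> = {\<one>\<^bsub>G\<^esub>}"
    using inj group_hom.inj_iff_trivial_ker[OF h] by simp
  finally show ?thesis
    using positive_cone_rel_vimage[OF h] P by (metis positive_cone_def)
qed

definition bs_class :: "nat \<Rightarrow> letter list \<Rightarrow> letter list set" where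
  "bs_class q u = bs_rel q `` {u}"

lemma equiv_bs_rel: "equiv UNIV (bs_rel q)"
  unfolding equiv_def refl_on_def sym_def trans_def bs_rel_def
  by (auto intro: bs_eq.intros)

lemma bs_class_eq_iff: "bs_class q u = bs_class q v \<longleftrightarrow> bs_eq q u v"
  using equiv_class_eq_iff[OF equiv_bs_rel, of u v q] by (simp add: bs_class_def bs_rel_def)

lemma mem_bs_class: "v \<in> bs_class q u \<longleftrightarrow> bs_eq q u v"
  by (simp add: bs_class_def bs_rel_def)

lemma bs_eq_append: "bs_eq q u u' \<Longrightarrow> bs_eq q v v' \<Longrightarrow> bs_eq q (u @ v) (u' @ v')"
  using bs_eq.ctxt[of q u u' "[]" v] bs_eq.ctxt[of q v v' u' "[]"] by (auto intro: bs_eq.trans)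

lemma carrier_BS: "carrier (BS q) = range (bs_class q)"
  by (auto simp: BS_def quotient_def bs_class_def)

lemma one_BS: "\<one>\<^bsub>BS q\<^esub> = bs_class q []"
  by (simp add: BS_def bs_class_def)

lemma some_mem_bs_class: "(SOME v. v \<in> bs_class q u) \<in> bs_class q u"
  by (rule someI[of _ u]) (simp add: mem_bs_class bs_eq.refl)

lemma mult_BS: "bs_class q u \<otimes>\<^bsub>BS q\<^esub> bs_class q v = bs_class q (u @ v)"
proof -
  have "bs_eq q ((SOME s. s \<in> bs_class q u) @ (SOME t. t \<in> bs_class q v)) (u @ v)"
    using some_mem_bs_class[of q u] some_mem_bs_class[of q v]
    by (simp add: mem_bs_class bs_eq_append bs_eq.sym)
  then show ?thesis
    by (simp add: BS_def bs_class_eq_iff flip: bs_class_def)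
qed

fun word_inv :: "letter list \<Rightarrow> letter list" where
  "word_inv [] = []"
| "word_inv ((g, s) # u) = word_inv u @ [(g, \<not> s)]"

lemma bs_eq_word_inv_append: "bs_eq q (word_inv u @ u) []"
proof (induction u)
  case Nil
  then show ?case by (simp add: bs_eq.refl)
next
  case (Cons x u)
  obtain g s where x: "x = (g, s)" by (cases x)
  have "bs_eq q (word_inv u @ [(g, \<not> s), (g, \<not> \<not> s)] @ u) (word_inv u @ [] @ u)"
    by (rule bs_eq.ctxt[OF bs_eq.cancel])
  then show ?case
    using Cons.IH by (auto simp: x intro: bs_eq.trans)
qed

lemma group_BS: "group (BS q)"
proof (rule groupI)
  fix x assume "x \<in> carrier (BS q)"
  then obtain u where u: "x = bs_class q u" by (auto simp: carrier_BS)
  show "\<exists>y\<in>carrier (BS q). y \<otimes>\<^bsub>BS q\<^esub> x = \<one>\<^bsub>BS q\<^esub>"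
    by (rule bexI[of _ "bs_class q (word_inv u)"])
       (auto simp: u mult_BS one_BS bs_class_eq_iff bs_eq_word_inv_append carrier_BS)
qed (auto simp: carrier_BS mult_BS one_BS)

lemma bs_a_class: "bs_a q = bs_class q [(GA, True)]"
  by (simp add: bs_a_def bs_class_def)

lemma bs_b_class: "bs_b q = bs_class q [(GB, True)]"
  by (simp add: bs_b_def bs_class_def)

lemma inv_BS_letter: "inv\<^bsub>BS q\<^esub> (bs_class q [(g, True)]) = bs_class q [(g, False)]"
  using bs_eq.cancel[of q g False]
  by (intro group.inv_equality[OF group_BS]) (auto simp: mult_BS one_BS bs_class_eq_iff carrier_BS)

lemma nat_pow_bs_class_letter: "bs_class q [x] [^]\<^bsub>BS q\<^esub> n = bs_class q (replicate n x)"
  by (induction n) (simp_all add: one_BS mult_BS flip: replicate_append_same)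

lemma bs_relator: "bs_a q \<otimes>\<^bsub>BS q\<^esub> bs_b q \<otimes>\<^bsub>BS q\<^esub> inv\<^bsub>BS q\<^esub> bs_a q = bs_b q [^]\<^bsub>BS q\<^esub> q"
  by (simp add: bs_a_class bs_b_class)
     (simp add: inv_BS_letter mult_BS nat_pow_bs_class_letter bs_class_eq_iff bs_eq.rel)

interpretation BS: bs_generators "BS q" "bs_a q" "bs_b q" q for q
  by (intro bs_generators.intro bs_generators_axioms.intro group_BS bs_relator)
     (simp_all add: bs_a_class bs_b_class carrier_BS)

lemma BS_normal_form:
  assumes "g \<in> carrier (BS q)"
  shows "\<exists>m k n. g = BS.normal_form q m k n"
proof -
  obtain u where "g = bs_class q u"
    using assms by (auto simp: carrier_BS)
  moreover have "\<exists>m k n. bs_class q u = BS.normal_form q m k n"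
  proof (induction u)
    case Nil
    have "bs_class q [] = BS.normal_form q 0 0 0"
      by (simp add: BS.normal_form_0_0 one_BS)
    then show ?case by blast
  next
    case (Cons x u)
    then obtain m k n where u: "bs_class q u = BS.normal_form q m k n" by blast
    obtain g s where x: "x = (g, s)" by (cases x)
    have "bs_class q (x # u) = bs_class q [x] \<otimes>\<^bsub>BS q\<^esub> BS.normal_form q m k n"
      by (simp add: mult_BS flip: u)
    then show ?case
      using BS.a_mult_normal_form BS.inv_a_mult_normal_form
        BS.b_int_pow_mult_normal_form[of q 1] BS.b_int_pow_mult_normal_form[of q "- 1"]
      by (cases g; cases s)
         (auto simp: x BS.int_pow_neg simp flip: bs_a_class bs_b_class inv_BS_letter)
  qed
  ultimately show ?thesis by blast
qed

section \<open>The affine representation\<close>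

lemma zero_less_powi_mult_iff:
  fixes c r :: "'a :: linordered_field"
  assumes "0 < c"
  shows "0 < c powi n * r \<longleftrightarrow> 0 < r"
  using assms by (meson mult_pos_pos zero_less_mult_pos zero_less_power_int)

text \<open>The pair \<open>(n, r)\<close> encodes the affine map \<open>x \<mapsto> q^n x + r\<close> of \<open>\<rat>\<close>, and the product
  is composition.\<close>
definition aff :: "nat \<Rightarrow> (int \<times> rat) monoid" where
  "aff q = \<lparr>carrier = UNIV,
     monoid.mult = (\<lambda>x y. (fst x + fst y, of_nat q powi fst x * snd y + snd x)),
     monoid.one = (0, 0)\<rparr>"

lemma aff_mult: "x \<otimes>\<^bsub>aff q\<^esub> y = (fst x + fst y, of_nat q powi fst x * snd y + snd x)"
  by (simp add: aff_def)

lemma aff_one: "\<one>\<^bsub>aff q\<^esub> = (0, 0)"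
  by (simp add: aff_def)

lemma carrier_aff: "carrier (aff q) = UNIV"
  by (simp add: aff_def)

lemma group_aff:
  assumes "q > 0"
  shows "group (aff q)"
proof (rule groupI)
  fix x y z :: "int \<times> rat"
  show "x \<otimes>\<^bsub>aff q\<^esub> y \<otimes>\<^bsub>aff q\<^esub> z = x \<otimes>\<^bsub>aff q\<^esub> (y \<otimes>\<^bsub>aff q\<^esub> z)"
    using assms by (simp add: aff_mult power_int_add algebra_simps)
  show "\<exists>y\<in>carrier (aff q). y \<otimes>\<^bsub>aff q\<^esub> x = \<one>\<^bsub>aff q\<^esub>"
    using assms
    by (intro bexI[of _ "(- fst x, - (of_nat q powi (- fst x)) * snd x)"])
       (auto simp: aff_mult aff_one carrier_aff)
qed (auto simp: aff_mult aff_one carrier_aff)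

lemma aff_inv:
  assumes "q > 0"
  shows "inv\<^bsub>aff q\<^esub> x = (- fst x, - (of_nat q powi (- fst x)) * snd x)"
  using assms
  by (intro group.inv_equality[OF group_aff[OF assms]])
     (auto simp: aff_mult aff_one carrier_aff power_int_minus)

lemma aff_nat_pow:
  "(1, 0) [^]\<^bsub>aff q\<^esub> n = (int n, 0)"
  "(0, 1) [^]\<^bsub>aff q\<^esub> n = (0, of_nat n)"
  by (induction n) (auto simp: aff_mult aff_one)

lemma aff_int_pow:
  assumes "q > 0"
  shows "(1, 0) [^]\<^bsub>aff q\<^esub> (t::int) = (t, 0)"
    and "(0, 1) [^]\<^bsub>aff q\<^esub> (t::int) = (0, of_int t)"
  by (auto simp: int_pow_def2 aff_nat_pow aff_inv[OF assms])

lemma inv_image_aff: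
  assumes "q > 0"
  shows "m_inv (aff q) ` {x. \<Psi> x} = {x. \<Psi> (inv\<^bsub>aff q\<^esub> x)}"
  using group.inv_image_eq[OF group_aff[OF assms]] by (simp add: carrier_aff)

lemma aff_inv_sign:
  assumes "q > 0"
  shows "fst (inv\<^bsub>aff q\<^esub> x) = - fst x"
    and "0 < snd (inv\<^bsub>aff q\<^esub> x) \<longleftrightarrow> snd x < 0"
    and "snd (inv\<^bsub>aff q\<^esub> x) = 0 \<longleftrightarrow> snd x = 0"
proof -
  have "0 < (of_nat q :: rat) powi (- fst x)"
    using assms by simp
  then show "fst (inv\<^bsub>aff q\<^esub> x) = - fst x"
    and "0 < snd (inv\<^bsub>aff q\<^esub> x) \<longleftrightarrow> snd x < 0"
    and "snd (inv\<^bsub>aff q\<^esub> x) = 0 \<longleftrightarrow> snd x = 0"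
    by (auto simp: aff_inv[OF assms] zero_less_mult_iff mult_less_0_iff simp del: zero_less_power_int)
qed

lemma aff_mult_snd_pos:
  assumes "q > 0" and "0 \<le> snd x" and "0 < snd y"
  shows "0 < snd (x \<otimes>\<^bsub>aff q\<^esub> y)"
  using assms by (simp add: aff_mult add_pos_nonneg)

lemma positive_cone_rel_aff:
  assumes "q > 0"
  shows "positive_cone_rel (aff q) {x. snd x = 0} {x. 0 < snd x}"
  unfolding positive_cone_rel_def inv_image_aff[OF assms]
  using assms by (auto simp: aff_inv_sign[OF assms] aff_mult_snd_pos carrier_aff)

lemma positive_cone_aff:
  assumes "q > 0"
  shows "positive_cone (aff q) {x. 0 < snd x \<or> snd x = 0 \<and> 0 < fst x}"
  unfolding positive_cone_def positive_cone_rel_def inv_image_aff[OF assms]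
  using assms
  by (auto simp: aff_inv_sign[OF assms] aff_mult_snd_pos carrier_aff aff_one prod_eq_iff)
     (auto simp: aff_mult)

fun aff_letter :: "letter \<Rightarrow> int \<times> rat" where
  "aff_letter (GA, s) = (if s then 1 else -1, 0)"
| "aff_letter (GB, s) = (0, if s then 1 else -1)"

fun aff_word :: "nat \<Rightarrow> letter list \<Rightarrow> int \<times> rat" where
  "aff_word q [] = (0, 0)"
| "aff_word q (x # u) = aff_letter x \<otimes>\<^bsub>aff q\<^esub> aff_word q u"

lemma aff_word_append:
  assumes "q > 0"
  shows "aff_word q (u @ v) = aff_word q u \<otimes>\<^bsub>aff q\<^esub> aff_word q v"
  using assms by (induction u) (simp_all add: aff_mult power_int_add algebra_simps)

lemma aff_word_replicate_b: "aff_word q (replicate n (GB, True)) = (0, of_nat n)"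
  by (induction n) (auto simp: aff_mult)

lemma aff_word_bs_eq:
  assumes "q > 0" and "bs_eq q u v"
  shows "aff_word q u = aff_word q v"
  using assms(2)
proof (induction rule: bs_eq.induct)
  case (ctxt u v x y)
  then show ?case by (simp add: aff_word_append[OF assms(1)])
next
  case (cancel g s)
  then show ?case by (cases g) (auto simp: aff_mult)
qed (auto simp: aff_word_replicate_b aff_mult)

definition bs_aff :: "nat \<Rightarrow> letter list set \<Rightarrow> int \<times> rat" where
  "bs_aff q g = aff_word q (SOME u. u \<in> g)"

lemma bs_aff_class:
  assumes "q > 0"
  shows "bs_aff q (bs_class q u) = aff_word q u"
  using some_mem_bs_class[of q u]
  by (auto simp: bs_aff_def mem_bs_class intro: aff_word_bs_eq[OF assms] bs_eq.sym)

lemma group_hom_bs_aff: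
  assumes "q > 0"
  shows "group_hom (BS q) (aff q) (bs_aff q)"
  by (auto simp: group_hom_def group_hom_axioms_def hom_def group_BS group_aff[OF assms]
      carrier_aff carrier_BS mult_BS bs_aff_class[OF assms] aff_word_append[OF assms])

lemma bs_aff_a_int_pow:
  assumes "q > 0"
  shows "bs_aff q (bs_a q [^]\<^bsub>BS q\<^esub> (t::int)) = (t, 0)"
  using group_hom.hom_int_pow[OF group_hom_bs_aff[OF assms] BS.a_closed]
  by (simp add: bs_a_class bs_aff_class[OF assms] aff_mult aff_int_pow[OF assms])

lemma bs_aff_b_int_pow:
  assumes "q > 0"
  shows "bs_aff q (bs_b q [^]\<^bsub>BS q\<^esub> (t::int)) = (0, of_int t)"
  using group_hom.hom_int_pow[OF group_hom_bs_aff[OF assms] BS.b_closed]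
  by (simp add: bs_b_class bs_aff_class[OF assms] aff_mult aff_int_pow[OF assms])

lemma bs_aff_mult:
  assumes "q > 0" and "x \<in> carrier (BS q)" and "y \<in> carrier (BS q)"
  shows "bs_aff q (x \<otimes>\<^bsub>BS q\<^esub> y) = bs_aff q x \<otimes>\<^bsub>aff q\<^esub> bs_aff q y"
  using group_hom.hom_mult[OF group_hom_bs_aff[OF assms(1)] assms(2,3)] .

lemma bs_aff_normal_form:
  assumes "q > 0"
  shows "bs_aff q (BS.normal_form q m k n) = (n, of_nat q powi (- int m) * of_int k)"
  by (simp add: BS.normal_form_def bs_aff_mult[OF assms] bs_aff_a_int_pow[OF assms]
      bs_aff_b_int_pow[OF assms] aff_mult)

lemma inj_bs_aff:
  assumes "q > 0"
  shows "inj_on (bs_aff q) (carrier (BS q))"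
proof -
  have "g = \<one>\<^bsub>BS q\<^esub>" if "g \<in> carrier (BS q)" and "bs_aff q g = (0, 0)" for g
  proof -
    obtain m k n where g: "g = BS.normal_form q m k n"
      using BS_normal_form[OF \<open>g \<in> carrier (BS q)\<close>] by blast
    with that(2) have "k = 0" and "n = 0"
      using assms by (simp_all add: bs_aff_normal_form)
    then show ?thesis by (simp add: g BS.normal_form_0_0)
  qed
  then have "kernel (BS q) (aff q) (bs_aff q) = {\<one>\<^bsub>BS q\<^esub>}"
    by (auto simp: kernel_def aff_one one_BS bs_aff_class[OF assms] carrier_BS)
  then show ?thesis
    by (simp add: group_hom.inj_iff_trivial_ker[OF group_hom_bs_aff[OF assms]])
qed

lemma eq_bs_a_int_pow:
  assumes "q > 0" and "g \<in> carrier (BS q)" and "snd (bs_aff q g) = 0"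
  shows "g = bs_a q [^]\<^bsub>BS q\<^esub> fst (bs_aff q g)"
  using assms by (intro inj_onD[OF inj_bs_aff]) (auto simp: bs_aff_a_int_pow prod_eq_iff)

lemma generate_bs_a:
  assumes "q > 0"
  shows "generate (BS q) {bs_a q} = bs_aff q -` {x. snd x = 0} \<inter> carrier (BS q)"
  using eq_bs_a_int_pow[OF assms]
  by (auto simp: BS.generate_pow bs_aff_a_int_pow[OF assms])

lemma positive_bs_a_powers:
  assumes "q > 0"
  shows "{bs_a q [^]\<^bsub>BS q\<^esub> (n::int) | n. n > 0}
    = bs_aff q -` {x. snd x = 0 \<and> 0 < fst x} \<inter> carrier (BS q)"
  using eq_bs_a_int_pow[OF assms]
  by (auto simp: bs_aff_a_int_pow[OF assms])

lemma BS_normal_form_pos: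
  assumes "q > 0" and "g \<in> carrier (BS q)" and "0 < snd (bs_aff q g)"
  shows "\<exists>m k n. g = BS.normal_form q m k n \<and> k > 0"
proof -
  obtain m k n where nf: "g = BS.normal_form q m k n"
    using BS_normal_form[OF assms(2)] by blast
  with assms have "k > 0"
    by (simp add: bs_aff_normal_form zero_less_powi_mult_iff)
  with nf show ?thesis by blast
qed

lemma conjugates_of_positive_b_powers:
  assumes "q > 0"
  shows "{bs_a q [^]\<^bsub>BS q\<^esub> (n::int) \<otimes>\<^bsub>BS q\<^esub>
           (bs_a q [^]\<^bsub>BS q\<^esub> (- m) \<otimes>\<^bsub>BS q\<^esub> bs_b q [^]\<^bsub>BS q\<^esub> (k::int)
            \<otimes>\<^bsub>BS q\<^esub> bs_a q [^]\<^bsub>BS q\<^esub> (m::int)) | n m k. k > 0}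
    = bs_aff q -` {x. 0 < snd x} \<inter> carrier (BS q)" (is "?P0 = _")
proof (intro equalityI subsetI)
  fix g assume "g \<in> ?P0"
  then show "g \<in> bs_aff q -` {x. 0 < snd x} \<inter> carrier (BS q)"
    using assms
    by (auto simp: bs_aff_mult bs_aff_a_int_pow bs_aff_b_int_pow aff_mult zero_less_mult_iff)
next
  fix g assume "g \<in> bs_aff q -` {x. 0 < snd x} \<inter> carrier (BS q)"
  then obtain m k n where "g = BS.normal_form q m k n" and "k > 0"
    using BS_normal_form_pos[OF assms] by blast
  then show "g \<in> ?P0"
    using BS.normal_form_eq_a_int_pow_mult_conj by blast
qed

section \<open>Regularity\<close>

fun code_letter :: "nat \<Rightarrow> letter" where
  "code_letter 0 = (GA, True)"
| "code_letter (Suc 0) = (GA, False)"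
| "code_letter (Suc (Suc 0)) = (GB, True)"
| "code_letter _ = (GB, False)"

definition bs_word :: "nat \<Rightarrow> nat list \<Rightarrow> letter list set" where
  "bs_word q w = bs_class q (map code_letter w)"

lemma code_letter_surj: "code_letter ` {0, 1, 2, 3} = UNIV"
proof -
  have "(g, s) \<in> code_letter ` {0, 1, 2, 3}" for g s
    by (cases g; cases s) (auto simp: image_iff numeral_eq_Suc)
  then show ?thesis by auto
qed

lemma regular_subset_BS:
  assumes "L \<subseteq> lists {0, 1, 2, 3}" and "fsa_accepted {0, 1, 2, 3} L" and "bs_word q ` L = P"
  shows "regular_subset (BS q) P"
  unfolding regular_subset_def
proof (intro exI conjI)
  show "bs_word q ` lists {0, 1, 2, 3} = carrier (BS q)"
    unfolding bs_word_def carrier_BS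
    by (metis image_image lists_image code_letter_surj lists_UNIV)
qed (use assms in \<open>simp_all add: bs_word_def one_BS mult_BS\<close>)

definition dfa_state :: "nat list \<Rightarrow> nat" where
  "dfa_state w =
     (if \<not> set w \<subseteq> {0, 1, 2} then 2
      else if 2 \<in> set w then 1
      else if w = [] then 0
      else if set w \<subseteq> {0} then 3
      else 4)"

definition dfa_step :: "nat \<Rightarrow> nat \<Rightarrow> nat" where
  "dfa_step s x =
     (if x \<notin> {0, 1, 2} \<or> s = 2 then 2
      else if s = 1 \<or> x = 2 then 1
      else if (s = 0 \<or> s = 3) \<and> x = 0 then 3
      else 4)"

lemma foldl_dfa_step: "foldl dfa_step 0 w = dfa_state w"
  by (induction w rule: rev_induct) (auto simp: dfa_step_def dfa_state_def)

lemma fsa_accepted_dfa_state: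
  assumes "F \<subseteq> {0..4}"
  shows "fsa_accepted {0, 1, 2, 3} {w \<in> lists {0, 1, 2, 3}. dfa_state w \<in> F}"
  unfolding fsa_accepted_def
  by (rule exI[of _ "{0..4}"], rule exI[of _ 0], rule exI[of _ F], rule exI[of _ dfa_step])
     (auto simp: assms dfa_step_def foldl_dfa_step)

definition P0_words :: "nat list set" where
  "P0_words = {w \<in> lists {0, 1, 2}. 2 \<in> set w}"

definition a_power_words :: "nat list set" where
  "a_power_words = {w \<in> lists {0}. w \<noteq> []}"

lemma fsa_accepted_P0_words: "fsa_accepted {0, 1, 2, 3} P0_words"
proof -
  have words: "P0_words = {w \<in> lists {0, 1, 2, 3}. dfa_state w \<in> {1}}"
    by (auto simp: P0_words_def dfa_state_def)
  show ?thesis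
    unfolding words by (rule fsa_accepted_dfa_state) simp
qed

lemma fsa_accepted_P0_a_power_words: "fsa_accepted {0, 1, 2, 3} (P0_words \<union> a_power_words)"
proof -
  have words: "P0_words \<union> a_power_words = {w \<in> lists {0, 1, 2, 3}. dfa_state w \<in> {1, 3}}"
    by (auto simp: P0_words_def a_power_words_def dfa_state_def)
  show ?thesis
    unfolding words by (rule fsa_accepted_dfa_state) simp
qed

lemma aff_word_snd_nonneg:
  assumes "q > 0" and "(GB, False) \<notin> set u"
  shows "0 \<le> snd (aff_word q u)"
  using assms(2)
proof (induction u)
  case (Cons x u)
  then show ?case
    using assms(1) by (cases x rule: aff_letter.cases) (auto simp: aff_mult)
qed simp

lemma aff_word_snd_pos:
  assumes "q > 0" and "(GB, False) \<notin> set u" and "(GB, True) \<in> set u"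
  shows "0 < snd (aff_word q u)"
  using assms(2,3)
proof (induction u)
  case (Cons x u)
  then show ?case
    using assms(1) aff_word_snd_nonneg[OF assms(1), of u]
    by (cases x rule: aff_letter.cases) (auto simp: aff_mult add_pos_nonneg)
qed simp

lemma bs_word_replicate:
  "bs_word q (replicate m 1 @ replicate k 2 @ replicate j 0)
    = BS.normal_form q m (int k) (int j - int m)"
proof -
  have "bs_word q (replicate m 1 @ replicate k 2 @ replicate j 0)
      = inv\<^bsub>BS q\<^esub> bs_a q [^]\<^bsub>BS q\<^esub> m \<otimes>\<^bsub>BS q\<^esub> (bs_b q [^]\<^bsub>BS q\<^esub> k \<otimes>\<^bsub>BS q\<^esub> bs_a q [^]\<^bsub>BS q\<^esub> j)"
    by (simp add: bs_word_def numeral_eq_Suc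
        flip: mult_BS nat_pow_bs_class_letter inv_BS_letter bs_a_class bs_b_class)
  then show ?thesis
    by (simp add: BS.normal_form_def BS.int_pow_neg_int BS.nat_pow_inv int_pow_int BS.m_assoc)
qed

lemma bs_word_P0_words:
  assumes "q > 0"
  shows "bs_word q ` P0_words = bs_aff q -` {x. 0 < snd x} \<inter> carrier (BS q)"
proof (intro equalityI subsetI)
  fix g assume "g \<in> bs_word q ` P0_words"
  then obtain w where "w \<in> lists {0, 1, 2}" and "2 \<in> set w" and g: "g = bs_word q w"
    by (auto simp: P0_words_def)
  then have "(GB, False) \<notin> set (map code_letter w)" and "(GB, True) \<in> set (map code_letter w)"
    by (force simp: numeral_eq_Suc)+
  then show "g \<in> bs_aff q -` {x. 0 < snd x} \<inter> carrier (BS q)"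
    by (simp add: g bs_word_def bs_aff_class[OF assms] aff_word_snd_pos[OF assms] carrier_BS)
next
  fix g assume "g \<in> bs_aff q -` {x. 0 < snd x} \<inter> carrier (BS q)"
  then obtain m k n where g: "g = BS.normal_form q m k n" and "k > 0"
    using BS_normal_form_pos[OF assms] by blast
  txt \<open>Rescaling makes the exponent of the trailing power of a nonnegative, so that the
    normal form is spelled by a word a^-m' b^k' a^j.\<close>
  define t where "t = nat (- n)"
  define k' where "k' = int q ^ t * k"
  have "k' > 0"
    using assms \<open>k > 0\<close> by (simp add: k'_def)
  have "int (m + t) + n \<ge> 0"
    by (simp add: t_def)
  have "g = BS.normal_form q (m + t) k' n"
    unfolding g k'_def by (rule BS.normal_form_rescale)
  also have "\<dots> = bs_word q (replicate (m + t) 1 @ replicate (nat k') 2 @ replicate (nat (int (m + t) + n)) 0)"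
    unfolding bs_word_replicate using \<open>k' > 0\<close> \<open>int (m + t) + n \<ge> 0\<close> by simp
  finally show "g \<in> bs_word q ` P0_words"
    using \<open>k' > 0\<close> by (auto simp: P0_words_def)
qed

lemma bs_word_a_power_words:
  "bs_word q ` a_power_words = {bs_a q [^]\<^bsub>BS q\<^esub> (n::int) | n. n > 0}"
proof -
  have bs_word: "bs_word q (replicate n 0) = bs_a q [^]\<^bsub>BS q\<^esub> int n" for n
    by (simp add: bs_word_def bs_a_class int_pow_int nat_pow_bs_class_letter)
  have "a_power_words = (\<lambda>n. replicate n 0) ` {n. n > 0}"
    by (auto simp: a_power_words_def image_iff) (metis length_greater_0_conv replicate_length_same)
  also have "bs_word q ` \<dots> = (\<lambda>n. bs_a q [^]\<^bsub>BS q\<^esub> int n) ` {n. n > 0}"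
    by (simp add: image_image bs_word)
  also have "\<dots> = {bs_a q [^]\<^bsub>BS q\<^esub> (n::int) | n. n > 0}"
    by (auto simp: image_iff dest: zero_less_imp_eq_int)
  finally show ?thesis .
qed

theorem lemma3p13:
  fixes q :: nat
  assumes "q \<ge> 2"
  defines "P0 \<equiv> {bs_a q [^]\<^bsub>BS q\<^esub> (n::int) \<otimes>\<^bsub>BS q\<^esub>
                  (bs_a q [^]\<^bsub>BS q\<^esub> (- m) \<otimes>\<^bsub>BS q\<^esub> bs_b q [^]\<^bsub>BS q\<^esub> (k::int)
                   \<otimes>\<^bsub>BS q\<^esub> bs_a q [^]\<^bsub>BS q\<^esub> (m::int)) | n m k. k > 0}"
  shows "positive_cone_rel (BS q) (generate (BS q) {bs_a q}) P0
         \<and> regular_subset (BS q) P0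
         \<and> positive_cone (BS q) ({bs_a q [^]\<^bsub>BS q\<^esub> (n::int) | n. n > 0} \<union> P0)
         \<and> regular_subset (BS q) ({bs_a q [^]\<^bsub>BS q\<^esub> (n::int) | n. n > 0} \<union> P0)"
proof -
  have q: "q > 0"
    using assms(1) by simp
  have P0: "P0 = bs_aff q -` {x. 0 < snd x} \<inter> carrier (BS q)"
    unfolding P0_def by (rule conjugates_of_positive_b_powers[OF q])
  have P: "{bs_a q [^]\<^bsub>BS q\<^esub> (n::int) | n. n > 0} \<union> P0
      = bs_aff q -` {x. 0 < snd x \<or> snd x = 0 \<and> 0 < fst x} \<inter> carrier (BS q)"
    unfolding P0 positive_bs_a_powers[OF q] by auto
  have words: "bs_word q ` P0_words = P0"
    "bs_word q ` (P0_words \<union> a_power_words) = {bs_a q [^]\<^bsub>BS q\<^esub> (n::int) | n. n > 0} \<union> P0"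
    by (auto simp: P0 bs_word_P0_words[OF q] bs_word_a_power_words image_Un)
  have alphabet: "P0_words \<union> a_power_words \<subseteq> lists {0, 1, 2, 3}"
    by (auto simp: P0_words_def a_power_words_def)
  have "regular_subset (BS q) P0"
    using alphabet by (intro regular_subset_BS[OF _ fsa_accepted_P0_words words(1)]) blast
  moreover have "regular_subset (BS q) ({bs_a q [^]\<^bsub>BS q\<^esub> (n::int) | n. n > 0} \<union> P0)"
    by (rule regular_subset_BS[OF alphabet fsa_accepted_P0_a_power_words words(2)])
  ultimately show ?thesis
    using positive_cone_rel_vimage[OF group_hom_bs_aff[OF q] positive_cone_rel_aff[OF q]]
      positive_cone_vimage[OF group_hom_bs_aff[OF q] inj_bs_aff[OF q] positive_cone_aff[OF q]]
    unfolding P generate_bs_a[OF q] unfolding P0 by blast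
qed

end
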